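(* Let $(\Omega,\mathbb{F},\mathbb{P})$ be a probability space, let $J\in\mathbb{N}$ and $S=\{0,1,\ldots,J\}$. For each $j,k\in S$, $k\neq j$, let $(\mu_{jk}(t))_{t\geq 0}$ be a stochastic process with values in $[0,\infty)$, continuous sample paths and $\mathbb{E}[\mu_{jk}(t)]<\infty$ for all $t$. Let $X=(X_t)_{t\geq 0}$ be a jump process with values in $S$ and deterministic initial state $x_0\in S$, constructed canonically (via the Ionescu-Tulcea theorem) so that, conditionally on $\mu=(\mu_{jk})_{j\neq k}$, $X$ is a Markov jump process with transition intensities $\mu$; in particular, for every $t$, $\mathbb{F}^X_{t+} \perp\!\!\!\perp \mathbb{F}^X_t \mid \sigma(X_t)\vee\mathbb{F}^\mu_\infty$, and there exist conditional transition probabilities $P^\mu_{jk}(t,T)$, depending on $\mu$ only through $(\mu(s))_{t\le s\le T}$, with $\mathbb{P}(X_T=k\mid \mathbb{F}^X_t\vee\mathbb{F}^\mu_\infty)=P^\mu_{X_t k}(t,T)$ for $0\le t<T$ and $\lim_{h\searrow 0}h^{-1}P^\mu_{jk}(t,t+h)=\mu_{jk}(t)$. Then for every $t\in[0,\infty)$, $$\mathbb{F}^{X,\mu}_{t+} \perp\!\!\!\perp \mathbb{F}^X_t \mid \sigma(X_t)\vee\mathbb{F}^\mu_t, \qquad \mathbb{F}^{\mu}_{t+} \perp\!\!\!\perp \mathbb{F}^X_t \mid \mathbb{F}^\mu_t.$$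
   Context: For a process $Z$, $\mathbb{F}^Z_t=\sigma(Z_s: s\le t)$, $\mathbb{F}^Z_\infty=\sigma(\bigcup_{t\ge0}\mathbb{F}^Z_t)$, and $\mathbb{F}^Z_{t+}=\sigma(Z_s: s>t)$ (the future information after time $t$). $\mathbb{F}^{X,\mu}$ denotes the corresponding filtrations generated jointly by $(X,\mu)$. $\mathcal{A}\vee\mathcal{B}$ is the smallest $\sigma$-algebra containing $\mathcal{A}$ and $\mathcal{B}$, and $\perp\!\!\!\perp \cdot\mid\cdot$ denotes conditional independence of $\sigma$-algebras. By the canonical construction, the conditional distribution of $(X_s)_{s\le t}$ given $\mathbb{F}^\mu_\infty$ depends on $\mu$ only through $(\mu(s))_{s\le t}$ (i.e. is $\mathbb{F}^\mu_t$-measurable). All identities hold $\mathbb{P}$-almost surely. *)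

theory Defs
  imports "HOL-Probability.Probability"
begin

definition sig :: "'a measure \<Rightarrow> 'a set set \<Rightarrow> 'a measure" where
  "sig M E = sigma (space M) E"

definition genX :: "'a measure \<Rightarrow> (real \<Rightarrow> 'a \<Rightarrow> nat) \<Rightarrow> real set \<Rightarrow> 'a set set" where
  "genX M X T = (\<Union>s\<in>T. {X s -` B \<inter> space M | B. B \<subseteq> (UNIV :: nat set)})"

definition genMu :: "'a measure \<Rightarrow> nat \<Rightarrow> (nat \<Rightarrow> nat \<Rightarrow> real \<Rightarrow> 'a \<Rightarrow> real) \<Rightarrow> real set \<Rightarrow> 'a set set" where
  "genMu M J mu T = (\<Union>s\<in>T. \<Union>j\<in>{0..J}. \<Union>k\<in>{0..J} - {j}.
      {mu j k s -` B \<inter> space M | B. B \<in> sets borel})"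

definition cond_indep :: "'a measure \<Rightarrow> 'a measure \<Rightarrow> 'a measure \<Rightarrow> 'a measure \<Rightarrow> bool" where
  "cond_indep M A B G \<longleftrightarrow>
     (\<forall>a\<in>sets A. \<forall>b\<in>sets B. AE \<omega> in M.
        real_cond_exp M G (indicator (a \<inter> b)) \<omega> =
        real_cond_exp M G (indicator a) \<omega> * real_cond_exp M G (indicator b) \<omega>)"

end

theory Submission
  imports Defs
begin

(*
  A and B are conditionally independent given G whenever G is contained in some Q with
  A contained in Q and P(b | Q) = P(b | G) for all b in B, by the tower property. Both
  claims are of this form, with B = F^X_t the history of X up to t.

  For the intensity claim take Q = F^mu_infty: by the canonical construction P(b | F^mu_infty)
  has an F^mu_t-measurable version, hence it is also P(b | F^mu_t).

  For the joint claim take Q = F^X_{t+} joined with sigma(X_t) and F^mu_infty. The conditional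
  Markov property and a pi-lambda argument remove F^X_{t+}. As X_t takes finitely many
  values, Bayes' formula on the atoms {X_t = i} gives
    P(b | sigma(X_t), F^mu_infty) = sum_i 1{X_t = i} P(b, X_t = i | F^mu_infty) / P(X_t = i | F^mu_infty),
  and by the canonical construction every quotient is F^mu_t-measurable, so this is also
  P(b | sigma(X_t), F^mu_t).

  Only the conditional Markov property and the canonical construction enter.
*)

lemma space_sig [simp]: "space (sig M E) = space M"
  unfolding sig_def by (simp add: space_measure_of_conv)

lemma sets_sig:
  assumes "E \<subseteq> sets M"
  shows "sets (sig M E) = sigma_sets (space M) E"
proof -
  have "E \<subseteq> Pow (space M)" using assms sets.sets_into_space by blast
  then show ?thesis unfolding sig_def by (simp add: sets_measure_of)
qed

lemma generators_subset_sets_sig: "E \<subseteq> sets M \<Longrightarrow> E \<subseteq> sets (sig M E)"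
  by (auto simp: sets_sig)

lemma subalgebra_sig: "E \<subseteq> sets M \<Longrightarrow> subalgebra M (sig M E)"
  by (simp add: subalgebra_def sets_sig sets.sigma_sets_subset)

lemma subalgebra_sig_mono:
  assumes "E' \<subseteq> sets M" "E \<subseteq> E'"
  shows "subalgebra (sig M E') (sig M E)"
proof -
  have "E \<subseteq> sets M" using assms by blast
  then show ?thesis using assms sigma_sets_mono'[OF assms(2), of "space M"]
    by (simp add: subalgebra_def sets_sig)
qed

lemma subalgebra_trans: "subalgebra M N \<Longrightarrow> subalgebra N F \<Longrightarrow> subalgebra M F"
  by (auto simp: subalgebra_def)

lemma (in prob_space) sigma_finite_subalgebraI: "subalgebra M F \<Longrightarrow> sigma_finite_subalgebra M F"
  by (intro finite_measure_subalgebra_is_sigma_finite)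
     (simp add: finite_measure_subalgebra_def finite_measure_subalgebra_axioms_def)

lemma Int_stable_sets: "Int_stable (sets M)"
  by (auto simp: Int_stable_def)

lemma Int_stable_Int_pairs:
  assumes A: "Int_stable A" and H: "Int_stable H"
  shows "Int_stable {a \<inter> h | a h. a \<in> A \<and> h \<in> H}"
proof (rule Int_stableI)
  fix x y assume "x \<in> {a \<inter> h | a h. a \<in> A \<and> h \<in> H}" "y \<in> {a \<inter> h | a h. a \<in> A \<and> h \<in> H}"
  then obtain a h a' h' where "x = a \<inter> h" "y = a' \<inter> h'" "a \<in> A" "h \<in> H" "a' \<in> A" "h' \<in> H"
    by blast
  then have "x \<inter> y = (a \<inter> a') \<inter> (h \<inter> h')" "a \<inter> a' \<in> A" "h \<inter> h' \<in> H"
    using Int_stableD[OF A] Int_stableD[OF H] by auto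
  then show "x \<inter> y \<in> {a \<inter> h | a h. a \<in> A \<and> h \<in> H}" by blast
qed

lemma sets_sig_Un_subset_sigma_sets_Int:
  assumes "EA \<union> EH \<subseteq> sets M" "EA \<subseteq> A" "EH \<subseteq> H" "space M \<in> A" "space M \<in> H"
  shows "sets (sig M (EA \<union> EH)) \<subseteq> sigma_sets (space M) {a \<inter> h | a h. a \<in> A \<and> h \<in> H}"
proof -
  have "x \<in> {a \<inter> h | a h. a \<in> A \<and> h \<in> H}" if "x \<in> EA \<union> EH" for x
  proof -
    have "x = x \<inter> space M" "x = space M \<inter> x"
      using that assms(1) sets.sets_into_space by blast+
    then show ?thesis using that assms(2-5) by blast
  qed
  then show ?thesis using assms(1) by (simp add: sets_sig sigma_sets_mono' subsetI)
qed

lemma set_integral_eq_zero_on_sigma_sets: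
  fixes h :: "'a \<Rightarrow> real"
  assumes h: "integrable M h" and E: "Int_stable E" "E \<subseteq> sets M" "space M \<in> E"
    and zero: "\<And>c. c \<in> E \<Longrightarrow> (\<integral>x\<in>c. h x \<partial>M) = 0"
    and c: "c \<in> sigma_sets (space M) E"
  shows "(\<integral>x\<in>c. h x \<partial>M) = 0"
  using E(1) E(2)[THEN subset_trans, OF sets.space_closed] c
proof (induction rule: sigma_sets_induct_disjoint)
  case (basic A)
  then show ?case by (rule zero)
next
  case empty
  then show ?case by (simp add: set_lebesgue_integral_def)
next
  case (compl A)
  have A: "A \<in> sets M" using compl sets.sigma_sets_subset[OF E(2)] by auto
  have "(\<integral>x\<in>space M - A. h x \<partial>M) = (\<integral>x. h x - indicator A x * h x \<partial>M)"
    unfolding set_lebesgue_integral_def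
    by (rule Bochner_Integration.integral_cong) (auto split: split_indicator)
  also have "\<dots> = (\<integral>x. h x \<partial>M) - (\<integral>x\<in>A. h x \<partial>M)"
    using integrable_mult_indicator[OF A h] h by (simp add: set_lebesgue_integral_def)
  also have "(\<integral>x. h x \<partial>M) = 0"
    using zero[OF E(3)] by (simp add: set_integral_space[OF h])
  finally show ?case using compl by simp
next
  case (union A)
  have A: "\<And>i. A i \<in> sets M" using union sets.sigma_sets_subset[OF E(2)] by auto
  have "(\<integral>x\<in>(\<Union>i. A i). h x \<partial>M) = (\<Sum>i. (\<integral>x\<in>A i. h x \<partial>M))"
  proof (rule lebesgue_integral_countable_add)
    show "\<And>i j. i \<noteq> j \<Longrightarrow> A i \<inter> A j = {}"
      using union(1) unfolding disjoint_family_on_def by auto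
    show "set_integrable M (\<Union>i. A i) h"
      unfolding set_integrable_def using integrable_mult_indicator[OF _ h, of "\<Union>i. A i"] A by auto
  qed (use A in auto)
  then show ?case using union by simp
qed

lemma set_integral_eq_on_sigma_sets:
  fixes f g :: "'a \<Rightarrow> real"
  assumes f: "integrable M f" and g: "integrable M g"
    and E: "Int_stable E" "E \<subseteq> sets M" "space M \<in> E"
    and eq: "\<And>c. c \<in> E \<Longrightarrow> (\<integral>x\<in>c. f x \<partial>M) = (\<integral>x\<in>c. g x \<partial>M)"
    and c: "c \<in> sigma_sets (space M) E"
  shows "(\<integral>x\<in>c. f x \<partial>M) = (\<integral>x\<in>c. g x \<partial>M)"
proof -
  have diff: "(\<integral>x\<in>c. f x - g x \<partial>M) = (\<integral>x\<in>c. f x \<partial>M) - (\<integral>x\<in>c. g x \<partial>M)"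
    if "c \<in> sets M" for c
    using integrable_mult_indicator[OF that f] integrable_mult_indicator[OF that g]
    by (intro set_integral_diff(2)) (simp_all add: set_integrable_def)
  have "(\<integral>x\<in>c. f x - g x \<partial>M) = 0"
  proof (rule set_integral_eq_zero_on_sigma_sets[OF _ E _ c])
    show "integrable M (\<lambda>x. f x - g x)" using f g by simp
    fix c assume "c \<in> E"
    then show "(\<integral>x\<in>c. f x - g x \<partial>M) = 0" using diff eq E(2) by auto
  qed
  moreover have "c \<in> sets M" using c sets.sigma_sets_subset[OF E(2)] by blast
  ultimately show ?thesis using diff by simp
qed

lemma set_integral_eq_on_sig_Un:
  fixes f g :: "'a \<Rightarrow> real"
  assumes f: "integrable M f" and g: "integrable M g"
    and A: "Int_stable A" "A \<subseteq> sets M" "space M \<in> A" "EA \<subseteq> A"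
    and H: "Int_stable H" "H \<subseteq> sets M" "space M \<in> H" "EH \<subseteq> H"
    and eq: "\<And>a h. a \<in> A \<Longrightarrow> h \<in> H \<Longrightarrow> (\<integral>x\<in>a \<inter> h. f x \<partial>M) = (\<integral>x\<in>a \<inter> h. g x \<partial>M)"
    and c: "c \<in> sets (sig M (EA \<union> EH))"
  shows "(\<integral>x\<in>c. f x \<partial>M) = (\<integral>x\<in>c. g x \<partial>M)"
proof (rule set_integral_eq_on_sigma_sets[OF f g])
  let ?E = "{a \<inter> h | a h. a \<in> A \<and> h \<in> H}"
  show "Int_stable ?E" by (rule Int_stable_Int_pairs[OF A(1) H(1)])
  show "?E \<subseteq> sets M" using A(2) H(2) by auto
  show "space M \<in> ?E" using A(3) H(3) by (intro CollectI exI[of _ "space M"]) simp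
  show "c \<in> sigma_sets (space M) ?E"
    using c sets_sig_Un_subset_sigma_sets_Int[of EA EH M A H] A H by blast
qed (use eq in blast)

lemma (in finite_measure) integrable_indicator_real:
  "A \<in> sets M \<Longrightarrow> integrable M (indicator A :: 'a \<Rightarrow> real)"
  by (simp add: integrable_indicator_iff emeasure_eq_measure)

lemma real_cond_exp_eq_of_measurable_version:
  assumes "prob_space M" and N: "subalgebra M N" and F: "subalgebra N F"
    and f: "integrable M f"
    and g: "g \<in> borel_measurable F" and version: "AE x in M. real_cond_exp M N f x = g x"
  shows "AE x in M. real_cond_exp M N f x = real_cond_exp M F f x"
proof -
  interpret prob_space M by fact
  interpret N: sigma_finite_subalgebra M N by (rule sigma_finite_subalgebraI) fact
  interpret F: sigma_finite_subalgebra M F by (rule sigma_finite_subalgebraI, rule subalgebra_trans) fact+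
  have gM: "g \<in> borel_measurable M" by (rule measurable_from_subalg[OF F.subalg g])
  have "integrable M g" by (rule integrable_cong_AE_imp[OF N.real_cond_exp_int(1)[OF f] gM version])
  then have "AE x in M. real_cond_exp M F g x = g x" by (rule F.real_cond_exp_F_meas[OF _ g])
  moreover have "AE x in M. real_cond_exp M F (real_cond_exp M N f) x = real_cond_exp M F g x"
    by (rule F.real_cond_exp_cong[OF version]) (auto simp: gM)
  moreover have "AE x in M. real_cond_exp M F (real_cond_exp M N f) x = real_cond_exp M F f x"
    by (rule F.real_cond_exp_nested_subalg[OF N F f])
  ultimately show ?thesis using version by eventually_elim simp
qed

lemma cond_indep_of_real_cond_exp_eq:
  assumes "prob_space M" and Q: "subalgebra M Q"
    and A: "subalgebra Q A" and G: "subalgebra Q G" and B: "subalgebra M B"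
    and eq: "\<And>b. b \<in> sets B \<Longrightarrow>
      AE x in M. real_cond_exp M Q (indicator b) x = real_cond_exp M G (indicator b) x"
  shows "cond_indep M A B G"
  unfolding cond_indep_def
proof (intro ballI)
  fix a b assume a: "a \<in> sets A" and b: "b \<in> sets B"
  interpret prob_space M by fact
  interpret Q: sigma_finite_subalgebra M Q by (rule sigma_finite_subalgebraI) fact
  interpret G: sigma_finite_subalgebra M G by (rule sigma_finite_subalgebraI, rule subalgebra_trans) fact+
  have aQ: "a \<in> sets Q" and aM: "a \<in> sets M" and bM: "b \<in> sets M"
    using a b A B Q by (auto simp: subalgebra_def)
  have [measurable]: "a \<in> sets M" "b \<in> sets M" "indicator a \<in> borel_measurable Q"
    using aQ aM bM by auto
  let ?ab = "\<lambda>x. indicator a x * indicator b x :: real"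
  have ia: "integrable M (indicator a :: _ \<Rightarrow> real)" and ib: "integrable M (indicator b :: _ \<Rightarrow> real)"
    using aM bM by (auto intro: integrable_indicator_real)
  have iab: "integrable M ?ab" using integrable_real_mult_indicator[OF bM ia] by simp
  have ab: "indicator (a \<inter> b) = ?ab" by (auto split: split_indicator)
  have iGb: "integrable M (\<lambda>x. real_cond_exp M G (indicator b) x * indicator a x)"
    by (rule integrable_real_mult_indicator[OF aM G.real_cond_exp_int(1)[OF ib]])
  have "AE x in M. real_cond_exp M G ?ab x = real_cond_exp M G (real_cond_exp M Q ?ab) x"
    using G.real_cond_exp_nested_subalg[OF Q G iab] by (auto elim: eventually_mono)
  moreover have "AE x in M. real_cond_exp M Q ?ab x = indicator a x * real_cond_exp M Q (indicator b) x"
    by (rule Q.real_cond_exp_mult) (auto simp: iab)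
  then have "AE x in M. real_cond_exp M G (real_cond_exp M Q ?ab) x
      = real_cond_exp M G (\<lambda>x. real_cond_exp M G (indicator b) x * indicator a x) x"
    by (intro G.real_cond_exp_cong) (use eq[OF b] in \<open>auto simp: mult.commute\<close>)
  moreover have "AE x in M. real_cond_exp M G (\<lambda>x. real_cond_exp M G (indicator b) x * indicator a x) x
      = real_cond_exp M G (indicator b) x * real_cond_exp M G (indicator a) x"
    by (rule G.real_cond_exp_mult) (auto simp: iGb)
  ultimately show "AE x in M. real_cond_exp M G (indicator (a \<inter> b)) x =
      real_cond_exp M G (indicator a) x * real_cond_exp M G (indicator b) x"
    unfolding ab by eventually_elim (simp add: mult.commute)
qed

lemma set_integral_indicator_cond_indep:
  assumes "prob_space M" and A: "subalgebra M A" and B: "subalgebra M B" and H: "subalgebra M H"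
    and indep: "cond_indep M A B H" and a: "a \<in> sets A" and b: "b \<in> sets B" and h: "h \<in> sets H"
  shows "(\<integral>x\<in>a \<inter> h. indicator b x \<partial>M) = (\<integral>x\<in>a \<inter> h. real_cond_exp M H (indicator b) x \<partial>M)"
proof -
  interpret prob_space M by fact
  interpret H: sigma_finite_subalgebra M H by (rule sigma_finite_subalgebraI) fact
  have aM: "a \<in> sets M" and bM: "b \<in> sets M" and hM: "h \<in> sets M"
    using a b h A B H by (auto simp: subalgebra_def)
  have [measurable]: "a \<in> sets M" "b \<in> sets M" "h \<in> sets M" "indicator h \<in> borel_measurable H"
    using aM bM hM h by auto
  have ib: "integrable M (indicator b :: _ \<Rightarrow> real)" and iab: "integrable M (indicator (a \<inter> b) :: _ \<Rightarrow> real)"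
    using aM bM by (auto intro: integrable_indicator_real)
  have iE: "integrable M (real_cond_exp M H (indicator b))" by (rule H.real_cond_exp_int(1)[OF ib])
  have "(\<integral>x\<in>a \<inter> h. indicator b x \<partial>M) = (\<integral>x. indicator h x * indicator (a \<inter> b) x \<partial>M :: real)"
    unfolding set_lebesgue_integral_def
    by (rule Bochner_Integration.integral_cong) (auto split: split_indicator)
  also have "\<dots> = (\<integral>x. indicator h x * real_cond_exp M H (indicator (a \<inter> b)) x \<partial>M)"
    by (rule H.real_cond_exp_intg(2)[symmetric])
       (use integrable_mult_indicator[OF hM iab] aM bM in auto)
  also have "\<dots> = (\<integral>x. (indicator h x * real_cond_exp M H (indicator b) x) * real_cond_exp M H (indicator a) x \<partial>M)"
    using indep a b unfolding cond_indep_def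
    by (intro integral_cong_AE) (auto elim!: eventually_mono simp: mult_ac)
  also have "\<dots> = (\<integral>x. (indicator h x * real_cond_exp M H (indicator b) x) * indicator a x \<partial>M)"
    by (rule H.real_cond_exp_intg(2))
       (use integrable_real_mult_indicator[OF aM integrable_mult_indicator[OF hM iE]] aM in auto)
  also have "\<dots> = (\<integral>x\<in>a \<inter> h. real_cond_exp M H (indicator b) x \<partial>M)"
    unfolding set_lebesgue_integral_def
    by (rule Bochner_Integration.integral_cong) (auto split: split_indicator)
  finally show ?thesis .
qed

lemma real_cond_exp_sig_Un_eq_of_cond_indep:
  assumes prob: "prob_space M" and EA: "EA \<subseteq> sets M" and EH: "EH \<subseteq> sets M"
    and B: "subalgebra M B" and indep: "cond_indep M (sig M EA) B (sig M EH)" and b: "b \<in> sets B"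
  shows "AE x in M. real_cond_exp M (sig M (EA \<union> EH)) (indicator b) x
    = real_cond_exp M (sig M EH) (indicator b) x"
proof -
  interpret prob_space M by fact
  let ?A = "sig M EA" and ?H = "sig M EH" and ?Q = "sig M (EA \<union> EH)"
  have A: "subalgebra M ?A" and H: "subalgebra M ?H" and Q: "subalgebra M ?Q"
    using EA EH by (auto intro: subalgebra_sig)
  interpret Q: sigma_finite_subalgebra M ?Q by (rule sigma_finite_subalgebraI) fact
  interpret H: sigma_finite_subalgebra M ?H by (rule sigma_finite_subalgebraI) fact
  have top: "space M \<in> sets ?A" "space M \<in> sets ?H"
    using sets.top[of ?A] sets.top[of ?H] by simp_all
  have ib: "integrable M (indicator b :: _ \<Rightarrow> real)"
    using b B by (auto simp: subalgebra_def intro: integrable_indicator_real)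
  have iE: "integrable M (real_cond_exp M ?H (indicator b))" by (rule H.real_cond_exp_int(1)[OF ib])
  have "subalgebra ?Q ?H" by (rule subalgebra_sig_mono) (use EA EH in auto)
  then have meas: "real_cond_exp M ?H (indicator b) \<in> borel_measurable ?Q"
    by (rule measurable_from_subalg) simp
  have A_sets: "sets ?A \<subseteq> sets M" and H_sets: "sets ?H \<subseteq> sets M"
    using A H by (simp_all add: subalgebra_def)
  have integrals: "(\<integral>x\<in>c. indicator b x \<partial>M) = (\<integral>x\<in>c. real_cond_exp M ?H (indicator b) x \<partial>M)"
    if c: "c \<in> sets ?Q" for c
    by (rule set_integral_eq_on_sig_Un[OF ib iE Int_stable_sets A_sets top(1) generators_subset_sets_sig[OF EA]
          Int_stable_sets H_sets top(2) generators_subset_sets_sig[OF EH]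
          set_integral_indicator_cond_indep[OF prob A B H indep _ b] c])
  show ?thesis by (rule Q.real_cond_exp_charact[OF integrals ib iE meas])
qed
lemma truncated_ratio_mult:
  fixes a c :: real
  assumes "0 \<le> a" "a \<le> c"
  shows "max 0 (min 1 (a / c)) * c = a"
proof -
  consider "c = 0" | "c > 0" using assms by linarith
  then show ?thesis
  proof cases
    case 1
    then show ?thesis using assms by simp
  next
    case 2
    then have "0 \<le> a / c" "a / c \<le> 1" using assms by simp_all
    then show ?thesis using 2 by simp
  qed
qed

lemma set_integral_indicator_eq_of_real_cond_exp:
  assumes "prob_space M" and N: "subalgebra M N"
    and a: "a \<in> sets M" and c: "c \<in> sets M"
    and r: "r \<in> borel_measurable N" "integrable M r"
    and ae: "AE x in M. r x * real_cond_exp M N (indicator c) x = real_cond_exp M N (indicator a) x"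
    and m: "m \<in> sets N"
  shows "(\<integral>x\<in>m. indicator a x \<partial>M) = (\<integral>x\<in>m. r x * indicator c x \<partial>M)"
proof -
  interpret prob_space M by fact
  interpret N: sigma_finite_subalgebra M N by (rule sigma_finite_subalgebraI) fact
  have mM [measurable]: "m \<in> sets M" using m N by (auto simp: subalgebra_def)
  have [measurable]: "indicator m \<in> borel_measurable N" using m by simp
  have [measurable]: "r \<in> borel_measurable M" by (rule measurable_from_subalg[OF N r(1)])
  have ia: "integrable M (indicator a :: _ \<Rightarrow> real)" using a by (rule integrable_indicator_real)
  have "(\<integral>x\<in>m. r x * indicator c x \<partial>M) = (\<integral>x. (indicator m x * r x) * indicator c x \<partial>M)"
    unfolding set_lebesgue_integral_def by (simp add: mult.assoc)
  also have "\<dots> = (\<integral>x. (indicator m x * r x) * real_cond_exp M N (indicator c) x \<partial>M)"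
    by (rule N.real_cond_exp_intg(2)[symmetric])
       (use integrable_real_mult_indicator[OF c integrable_mult_indicator[OF mM r(2)]] r(1) c in auto)
  also have "\<dots> = (\<integral>x. indicator m x * real_cond_exp M N (indicator a) x \<partial>M)"
    using ae by (intro integral_cong_AE) (auto elim!: eventually_mono)
  also have "\<dots> = (\<integral>x\<in>m. indicator a x \<partial>M)"
    unfolding set_lebesgue_integral_def
    by (subst N.real_cond_exp_intg(2)) (use integrable_mult_indicator[OF mM ia] a in auto)
  finally show ?thesis ..
qed

lemma real_cond_exp_indicator_ratio:
  assumes prob: "prob_space M" and N: "subalgebra M N" and F: "subalgebra N F"
    and a: "a \<in> sets M" and c: "c \<in> sets M" and "a \<subseteq> c"
    and ga: "ga \<in> borel_measurable F" "AE x in M. real_cond_exp M N (indicator a) x = ga x"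
    and gc: "gc \<in> borel_measurable F" "AE x in M. real_cond_exp M N (indicator c) x = gc x"
  shows "\<exists>r\<in>borel_measurable F. (\<forall>x. 0 \<le> r x \<and> r x \<le> (1::real)) \<and>
    (\<forall>m\<in>sets N. (\<integral>x\<in>m. indicator a x \<partial>M) = (\<integral>x\<in>m. r x * indicator c x \<partial>M))"
proof -
  interpret prob_space M by fact
  interpret N: sigma_finite_subalgebra M N by (rule sigma_finite_subalgebraI) fact
  \<comment> \<open>Truncation makes \<open>r\<close> bounded; as \<open>0 \<le> ga \<le> gc\<close> a.e., still \<open>r * gc = ga\<close> a.e.,
    also where \<open>gc = 0\<close>.\<close>
  define r where "r x = max 0 (min 1 (ga x / gc x))" for x
  have rF: "r \<in> borel_measurable F" unfolding r_def using ga gc by measurable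
  have r_bounds: "0 \<le> r x \<and> r x \<le> 1" for x unfolding r_def by auto
  have rN: "r \<in> borel_measurable N" by (rule measurable_from_subalg[OF F rF])
  have ir: "integrable M r"
    by (rule integrable_const_bound[where B=1]) (use r_bounds measurable_from_subalg[OF N rN] in auto)
  have ia: "integrable M (indicator a :: _ \<Rightarrow> real)" and ic: "integrable M (indicator c :: _ \<Rightarrow> real)"
    using a c by (auto intro: integrable_indicator_real)
  have "AE x in M. real_cond_exp M N (indicator a) x \<le> real_cond_exp M N (indicator c) x"
    using \<open>a \<subseteq> c\<close> by (intro N.real_cond_exp_mono) (auto simp: ia ic split: split_indicator)
  moreover have "AE x in M. 0 \<le> real_cond_exp M N (indicator a) x"
    using a by (intro N.real_cond_exp_pos) auto
  ultimately have "AE x in M. r x * real_cond_exp M N (indicator c) x = real_cond_exp M N (indicator a) x"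
    using ga(2) gc(2)
  proof eventually_elim
    case (elim x)
    then show ?case using truncated_ratio_mult[of "ga x" "gc x"] unfolding r_def by simp
  qed
  then have "(\<integral>x\<in>m. indicator a x \<partial>M) = (\<integral>x\<in>m. r x * indicator c x \<partial>M)" if "m \<in> sets N" for m
    by (rule set_integral_indicator_eq_of_real_cond_exp[OF prob N a c rN ir _ that])
  then show ?thesis by (intro bexI[OF _ rF]) (simp add: r_bounds)
qed

lemma sum_indicator_level_sets:
  assumes "finite S" "x \<in> space M" "Y x \<in> S"
  shows "(\<Sum>i\<in>S. f i * indicator {x\<in>space M. Y x = i} x) = (f (Y x) :: real)"
proof -
  have "(\<Sum>i\<in>S. f i * indicator {x\<in>space M. Y x = i} x) = (\<Sum>i\<in>S. if Y x = i then f i else 0)"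
    using assms by (intro sum.cong) (auto split: split_indicator)
  then show ?thesis using assms by simp
qed

lemma set_integral_vimage_Int_eq_sum:
  fixes g :: "'a \<Rightarrow> real"
  assumes Y: "Y \<in> measurable M (count_space UNIV)"
    and S: "finite S" "\<And>x. x \<in> space M \<Longrightarrow> Y x \<in> S"
    and g: "integrable M g" and m: "m \<in> sets M"
  shows "(\<integral>x\<in>Y -` B \<inter> space M \<inter> m. g x \<partial>M)
    = (\<Sum>i\<in>S. indicator B i * (\<integral>x\<in>m. g x * indicator {x\<in>space M. Y x = i} x \<partial>M))"
proof -
  let ?Y = "\<lambda>i. {x\<in>space M. Y x = i}"
  have [measurable]: "Y \<in> measurable M (count_space UNIV)" by (fact Y)
  have pointwise: "indicator (Y -` B \<inter> space M \<inter> m) x *\<^sub>R g x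
      = (\<Sum>i\<in>S. indicator B i * (indicator m x * g x) * indicator (?Y i) x)"
    if x: "x \<in> space M" for x
  proof -
    have "indicator (Y -` B \<inter> space M \<inter> m) x *\<^sub>R g x = indicator B (Y x) * (indicator m x * g x)"
      using x by (auto split: split_indicator)
    then show ?thesis by (simp only: sum_indicator_level_sets[where Y = Y, OF S(1) x S(2)[OF x]])
  qed
  have "(\<integral>x\<in>Y -` B \<inter> space M \<inter> m. g x \<partial>M)
      = (\<integral>x. (\<Sum>i\<in>S. indicator B i * (indicator m x * g x) * indicator (?Y i) x) \<partial>M)"
    unfolding set_lebesgue_integral_def by (rule Bochner_Integration.integral_cong[OF refl pointwise])
  also have "\<dots> = (\<Sum>i\<in>S. \<integral>x. indicator B i * (indicator m x * g x) * indicator (?Y i) x \<partial>M)"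
  proof (rule Bochner_Integration.integral_sum)
    fix i
    have "?Y i \<in> sets M" by measurable
    then have "integrable M (\<lambda>x. indicator m x * (g x * indicator (?Y i) x))"
      using integrable_mult_indicator[OF m integrable_real_mult_indicator[OF _ g]] by simp
    then show "integrable M (\<lambda>x. indicator B i * (indicator m x * g x) * indicator (?Y i) x)"
      by (simp add: mult.assoc)
  qed
  also have "\<dots> = (\<Sum>i\<in>S. indicator B i * (\<integral>x\<in>m. g x * indicator (?Y i) x \<partial>M))"
    unfolding set_lebesgue_integral_def by (simp add: mult.assoc)
  finally show ?thesis .
qed

lemma level_set_in_sets_sig:
  assumes "Y \<in> measurable M (count_space UNIV)" "E \<subseteq> sets M"
  shows "{x\<in>space M. Y x = i} \<in> sets (sig M ({Y -` B \<inter> space M | B. True} \<union> E))"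
proof -
  let ?EY = "{Y -` B \<inter> space M | B. True}"
  have "?EY \<union> E \<subseteq> sets M" using assms by (auto intro: measurable_sets)
  then have "?EY \<subseteq> sets (sig M (?EY \<union> E))"
    by (rule subset_trans[OF Un_upper1 generators_subset_sets_sig])
  moreover have "{x\<in>space M. Y x = i} = Y -` {i} \<inter> space M" by auto
  then have "{x\<in>space M. Y x = i} \<in> ?EY" by blast
  ultimately show ?thesis by (rule subsetD)
qed

lemma Int_stable_vimage_sets: "Int_stable {Y -` B \<inter> space M | B. True}"
proof (rule Int_stableI)
  fix e e' assume "e \<in> {Y -` B \<inter> space M | B. True}" "e' \<in> {Y -` B \<inter> space M | B. True}"
  then obtain B B' where "e = Y -` B \<inter> space M" "e' = Y -` B' \<inter> space M" by blast
  then have "e \<inter> e' = Y -` (B \<inter> B') \<inter> space M" by auto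
  then show "e \<inter> e' \<in> {Y -` B \<inter> space M | B. True}" by blast
qed

lemma set_integral_eq_on_sig_vimage_Un:
  fixes f g :: "'a \<Rightarrow> real" and Y :: "'a \<Rightarrow> 'b"
  assumes Y: "Y \<in> measurable M (count_space UNIV)"
    and S: "finite S" "\<And>x. x \<in> space M \<Longrightarrow> Y x \<in> S"
    and EI: "EI \<subseteq> sets M" and f: "integrable M f" and g: "integrable M g"
    and eq: "\<And>i m. i \<in> S \<Longrightarrow> m \<in> sets (sig M EI) \<Longrightarrow>
      (\<integral>x\<in>m. f x * indicator {x\<in>space M. Y x = i} x \<partial>M)
        = (\<integral>x\<in>m. g x * indicator {x\<in>space M. Y x = i} x \<partial>M)"
    and c: "c \<in> sets (sig M ({Y -` B \<inter> space M | B. True} \<union> EI))"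
  shows "(\<integral>x\<in>c. f x \<partial>M) = (\<integral>x\<in>c. g x \<partial>M)"
proof -
  let ?EY = "{Y -` B \<inter> space M | B. True}" and ?I = "sig M EI"
  have EY: "?EY \<subseteq> sets M" using Y by (auto intro: measurable_sets)
  have space_EY: "space M \<in> ?EY" by (auto intro!: exI[of _ UNIV])
  have I: "sets ?I \<subseteq> sets M" "space M \<in> sets ?I"
    using subalgebra_sig[OF EI] sets.top[of ?I] by (simp_all add: subalgebra_def)
  have atoms: "(\<integral>x\<in>e \<inter> m. f x \<partial>M) = (\<integral>x\<in>e \<inter> m. g x \<partial>M)"
    if e: "e \<in> ?EY" and m: "m \<in> sets ?I" for e m
  proof -
    obtain B where em: "e \<inter> m = Y -` B \<inter> space M \<inter> m" using e by blast
    have mM: "m \<in> sets M" using m I by blast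
    show ?thesis unfolding em
      using eq[OF _ m] by (simp add: set_integral_vimage_Int_eq_sum[OF Y S f mM] set_integral_vimage_Int_eq_sum[OF Y S g mM])
  qed
  show ?thesis
    by (rule set_integral_eq_on_sig_Un[OF f g Int_stable_vimage_sets EY space_EY subset_refl
          Int_stable_sets I generators_subset_sets_sig[OF EI] atoms c])
qed

text \<open>Bayes' formula on the level sets of \<open>Y\<close>: \<open>r i\<close> plays the role of
  \<open>P(b \<inter> {Y = i} | I) / P(Y = i | I)\<close>.\<close>

lemma real_cond_exp_level_sets_Bayes:
  fixes Y :: "'a \<Rightarrow> 'b" and r :: "'b \<Rightarrow> 'a \<Rightarrow> real"
  assumes "prob_space M" and Y: "Y \<in> measurable M (count_space UNIV)"
    and S: "finite S" "\<And>x. x \<in> space M \<Longrightarrow> Y x \<in> S"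
    and EI: "EI \<subseteq> sets M" and b: "b \<in> sets M"
    and r: "\<And>i. i \<in> S \<Longrightarrow> r i \<in> borel_measurable (sig M EI)" "\<And>i. i \<in> S \<Longrightarrow> integrable M (r i)"
    and ratio: "\<And>i m. i \<in> S \<Longrightarrow> m \<in> sets (sig M EI) \<Longrightarrow>
      (\<integral>x\<in>m. indicator (b \<inter> {x\<in>space M. Y x = i}) x \<partial>M)
        = (\<integral>x\<in>m. r i x * indicator {x\<in>space M. Y x = i} x \<partial>M)"
  defines "EY \<equiv> {Y -` B \<inter> space M | B. True}"
  shows "AE x in M. real_cond_exp M (sig M (EY \<union> EI)) (indicator b) x
    = (\<Sum>i\<in>S. r i x * indicator {x\<in>space M. Y x = i} x)"
proof -
  interpret prob_space M by fact
  let ?I = "sig M EI" and ?H = "sig M (EY \<union> EI)" and ?Y = "\<lambda>i. {x\<in>space M. Y x = i}"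
  define \<psi> where "\<psi> x = (\<Sum>i\<in>S. r i x * indicator (?Y i) x)" for x
  have [measurable]: "Y \<in> measurable M (count_space UNIV)" by (fact Y)
  have EY: "EY \<subseteq> sets M" unfolding EY_def using Y by (auto intro: measurable_sets)
  have H: "subalgebra M ?H" by (rule subalgebra_sig) (use EY EI in auto)
  interpret H: sigma_finite_subalgebra M ?H by (rule sigma_finite_subalgebraI) fact
  have [measurable]: "?Y i \<in> sets ?H" for i
    unfolding EY_def by (rule level_set_in_sets_sig[OF Y EI])
  have [measurable]: "r i \<in> borel_measurable ?H" if "i \<in> S" for i
    by (rule measurable_from_subalg[OF _ r(1)[OF that]], rule subalgebra_sig_mono) (use EY EI in auto)
  have \<psi>_H: "\<psi> \<in> borel_measurable ?H" unfolding \<psi>_def by measurable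
  have "integrable M (\<lambda>x. r i x * indicator (?Y i) x)" if "i \<in> S" for i
    by (rule integrable_real_mult_indicator[OF _ r(2)[OF that]]) measurable
  then have i\<psi>: "integrable M \<psi>" unfolding \<psi>_def by auto
  have ib: "integrable M (indicator b :: _ \<Rightarrow> real)" by (rule integrable_indicator_real[OF b])
  have restrict_Y: "(\<integral>x\<in>m. indicator b x * indicator (?Y i) x \<partial>M) = (\<integral>x\<in>m. \<psi> x * indicator (?Y i) x \<partial>M)"
    if i: "i \<in> S" and m: "m \<in> sets ?I" for i m
  proof -
    have "\<psi> x * indicator (?Y i) x = r i x * indicator (?Y i) x" if "x \<in> space M" for x
      using sum_indicator_level_sets[where Y = Y, OF S(1) that S(2)[OF that], of "\<lambda>i. r i x"] that
      unfolding \<psi>_def by (auto split: split_indicator)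
    then have "(\<integral>x\<in>m. \<psi> x * indicator (?Y i) x \<partial>M) = (\<integral>x\<in>m. r i x * indicator (?Y i) x \<partial>M)"
      unfolding set_lebesgue_integral_def by (intro Bochner_Integration.integral_cong) auto
    then show ?thesis using ratio[OF i m] by (simp add: indicator_inter_arith)
  qed
  have "(\<integral>x\<in>c. indicator b x \<partial>M) = (\<integral>x\<in>c. \<psi> x \<partial>M)" if c: "c \<in> sets ?H" for c
    by (rule set_integral_eq_on_sig_vimage_Un[OF Y S EI ib i\<psi> restrict_Y c[unfolded EY_def]])
  then show ?thesis unfolding \<psi>_def[symmetric] by (intro H.real_cond_exp_charact) (auto simp: ib i\<psi> \<psi>_H)
qed

lemma real_cond_exp_level_set_ratios:
  fixes Y :: "'a \<Rightarrow> 'b"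
  assumes prob: "prob_space M" and Y: "Y \<in> measurable M (count_space UNIV)"
    and N: "subalgebra M N" and F: "subalgebra N F" and b: "b \<in> sets M"
    and versions: "\<And>i A. i \<in> S \<Longrightarrow> A \<in> {space M, b} \<Longrightarrow>
      \<exists>g \<in> borel_measurable F. AE x in M.
        real_cond_exp M N (indicator (A \<inter> {x\<in>space M. Y x = i})) x = g x"
  obtains r :: "'b \<Rightarrow> 'a \<Rightarrow> real"
  where "\<And>i. i \<in> S \<Longrightarrow> r i \<in> borel_measurable F"
    and "\<And>i x. i \<in> S \<Longrightarrow> 0 \<le> r i x \<and> r i x \<le> 1"
    and "\<And>i m. i \<in> S \<Longrightarrow> m \<in> sets N \<Longrightarrow>
      (\<integral>x\<in>m. indicator (b \<inter> {x\<in>space M. Y x = i}) x \<partial>M)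
        = (\<integral>x\<in>m. r i x * indicator {x\<in>space M. Y x = i} x \<partial>M)"
proof -
  let ?Y = "\<lambda>i. {x\<in>space M. Y x = i}"
  have [measurable]: "Y \<in> measurable M (count_space UNIV)" by (fact Y)
  have ratio_ex: "\<forall>i\<in>S. \<exists>r\<in>borel_measurable F. (\<forall>x. 0 \<le> r x \<and> r x \<le> (1::real)) \<and>
      (\<forall>m\<in>sets N. (\<integral>x\<in>m. indicator (b \<inter> ?Y i) x \<partial>M) = (\<integral>x\<in>m. r x * indicator (?Y i) x \<partial>M))"
  proof
    fix i assume i: "i \<in> S"
    have Yi: "?Y i \<in> sets M" by measurable
    obtain ga where ga: "ga \<in> borel_measurable F"
      "AE x in M. real_cond_exp M N (indicator (b \<inter> ?Y i)) x = ga x"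
      using versions[OF i, of b] by blast
    obtain gc where gc: "gc \<in> borel_measurable F"
      "AE x in M. real_cond_exp M N (indicator (?Y i)) x = gc x"
      using versions[OF i, of "space M"] by (auto simp: Int_absorb1)
    show "\<exists>r\<in>borel_measurable F. (\<forall>x. 0 \<le> r x \<and> r x \<le> (1::real)) \<and>
      (\<forall>m\<in>sets N. (\<integral>x\<in>m. indicator (b \<inter> ?Y i) x \<partial>M) = (\<integral>x\<in>m. r x * indicator (?Y i) x \<partial>M))"
      by (rule real_cond_exp_indicator_ratio[OF prob N F sets.Int[OF b Yi] Yi Int_lower2 ga gc])
  qed
  obtain r where r: "\<forall>i\<in>S. r i \<in> borel_measurable F \<and> (\<forall>x. 0 \<le> r i x \<and> r i x \<le> (1::real)) \<and>
      (\<forall>m\<in>sets N. (\<integral>x\<in>m. indicator (b \<inter> ?Y i) x \<partial>M) = (\<integral>x\<in>m. r i x * indicator (?Y i) x \<partial>M))"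
    using bchoice[OF ratio_ex[unfolded Bex_def]] by blast
  then have rF: "\<And>i. i \<in> S \<Longrightarrow> r i \<in> borel_measurable F"
    and r_bounds: "\<And>i x. i \<in> S \<Longrightarrow> 0 \<le> r i x \<and> r i x \<le> 1"
    and ratio: "\<And>i m. i \<in> S \<Longrightarrow> m \<in> sets N \<Longrightarrow>
      (\<integral>x\<in>m. indicator (b \<inter> ?Y i) x \<partial>M) = (\<integral>x\<in>m. r i x * indicator (?Y i) x \<partial>M)"
    by simp_all
  show ?thesis by (rule that[OF rF r_bounds ratio])
qed

lemma real_cond_exp_sig_vimage_Un_eq:
  fixes Y :: "'a \<Rightarrow> 'b"
  assumes prob: "prob_space M" and Y: "Y \<in> measurable M (count_space UNIV)"
    and S: "finite S" "\<And>x. x \<in> space M \<Longrightarrow> Y x \<in> S"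
    and EI: "EI \<subseteq> sets M" and EF: "EF \<subseteq> EI" and b: "b \<in> sets M"
    and versions: "\<And>i A. i \<in> S \<Longrightarrow> A \<in> {space M, b} \<Longrightarrow>
      \<exists>g \<in> borel_measurable (sig M EF). AE x in M.
        real_cond_exp M (sig M EI) (indicator (A \<inter> {x\<in>space M. Y x = i})) x = g x"
  defines "EY \<equiv> {Y -` B \<inter> space M | B. True}"
  shows "AE x in M. real_cond_exp M (sig M (EY \<union> EI)) (indicator b) x
    = real_cond_exp M (sig M (EY \<union> EF)) (indicator b) x"
proof -
  interpret prob_space M by fact
  let ?I = "sig M EI" and ?F = "sig M EF" and ?Y = "\<lambda>i. {x\<in>space M. Y x = i}"
  have EY: "EY \<subseteq> sets M" unfolding EY_def using Y by (auto intro: measurable_sets)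
  have I: "subalgebra M ?I" and IF: "subalgebra ?I ?F"
    using EI EF by (auto intro: subalgebra_sig subalgebra_sig_mono)
  have H: "subalgebra M (sig M (EY \<union> EI))" and HG: "subalgebra (sig M (EY \<union> EI)) (sig M (EY \<union> EF))"
    and GF: "subalgebra (sig M (EY \<union> EF)) ?F"
    using EI EF EY by (auto intro: subalgebra_sig subalgebra_sig_mono)
  obtain r :: "'b \<Rightarrow> 'a \<Rightarrow> real" where rF: "\<And>i. i \<in> S \<Longrightarrow> r i \<in> borel_measurable ?F"
    and r_bounds: "\<And>i x. i \<in> S \<Longrightarrow> 0 \<le> r i x \<and> r i x \<le> 1"
    and ratio: "\<And>i m. i \<in> S \<Longrightarrow> m \<in> sets ?I \<Longrightarrow>
      (\<integral>x\<in>m. indicator (b \<inter> ?Y i) x \<partial>M) = (\<integral>x\<in>m. r i x * indicator (?Y i) x \<partial>M)"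
    using real_cond_exp_level_set_ratios[OF prob Y I IF b versions] by blast
  have rI: "r i \<in> borel_measurable ?I" if "i \<in> S" for i
    by (rule measurable_from_subalg[OF IF rF[OF that]])
  have "integrable M (r i)" if "i \<in> S" for i
    by (rule integrable_const_bound[where B=1])
       (use r_bounds[OF that] measurable_from_subalg[OF I rI[OF that]] in auto)
  with rI ratio have version: "AE x in M. real_cond_exp M (sig M (EY \<union> EI)) (indicator b) x
      = (\<Sum>i\<in>S. r i x * indicator (?Y i) x)"
    unfolding EY_def by (intro real_cond_exp_level_sets_Bayes[OF prob Y S EI b]) auto
  have [measurable]: "?Y i \<in> sets (sig M (EY \<union> EF))" for i
    unfolding EY_def by (rule level_set_in_sets_sig[OF Y]) (use EI EF in auto)
  have [measurable]: "r i \<in> borel_measurable (sig M (EY \<union> EF))" if "i \<in> S" for i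
    by (rule measurable_from_subalg[OF GF rF[OF that]])
  have "(\<lambda>x. \<Sum>i\<in>S. r i x * indicator (?Y i) x) \<in> borel_measurable (sig M (EY \<union> EF))"
    by measurable
  then show ?thesis
    by (rule real_cond_exp_eq_of_measurable_version[OF prob H HG integrable_indicator_real[OF b] _ version])
qed

lemma genX_mono: "T \<subseteq> T' \<Longrightarrow> genX M X T \<subseteq> genX M X T'"
  unfolding genX_def by blast

lemma genMu_mono: "T \<subseteq> T' \<Longrightarrow> genMu M J mu T \<subseteq> genMu M J mu T'"
  unfolding genMu_def by blast

lemma genX_singleton: "genX M X {t} = {X t -` B \<inter> space M | B. True}"
  unfolding genX_def by simp

locale stochastic_intensity_jump_process = prob_space M
  for M :: "'a measure" and J :: nat and X :: "real \<Rightarrow> 'a \<Rightarrow> nat"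
    and mu :: "nat \<Rightarrow> nat \<Rightarrow> real \<Rightarrow> 'a \<Rightarrow> real" +
  assumes mu_meas: "\<And>j k t. j \<in> {0..J} \<Longrightarrow> k \<in> {0..J} \<Longrightarrow> k \<noteq> j \<Longrightarrow> t \<ge> 0 \<Longrightarrow>
      mu j k t \<in> borel_measurable M"
    and X_meas: "\<And>t. t \<ge> 0 \<Longrightarrow> X t \<in> measurable M (count_space UNIV)"
    and X_vals: "\<And>t \<omega>. t \<ge> 0 \<Longrightarrow> \<omega> \<in> space M \<Longrightarrow> X t \<omega> \<in> {0..J}"
    and markov: "\<And>t. t \<ge> 0 \<Longrightarrow>
      cond_indep M (sig M (genX M X {t<..})) (sig M (genX M X {0..t}))
        (sig M (genX M X {t} \<union> genMu M J mu {0..}))"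
    and canon: "\<And>t A. t \<ge> 0 \<Longrightarrow> A \<in> sets (sig M (genX M X {0..t})) \<Longrightarrow>
      \<exists>g \<in> borel_measurable (sig M (genMu M J mu {0..t})).
        AE \<omega> in M. real_cond_exp M (sig M (genMu M J mu {0..})) (indicator A) \<omega> = g \<omega>"
begin

lemma genX_subset_sets: "T \<subseteq> {0..} \<Longrightarrow> genX M X T \<subseteq> sets M"
  unfolding genX_def using X_meas by (auto intro: measurable_sets)

lemma genMu_subset_sets: "T \<subseteq> {0..} \<Longrightarrow> genMu M J mu T \<subseteq> sets M"
  unfolding genMu_def using mu_meas by (fastforce intro: measurable_sets)

lemma X_level_set_in_past:
  assumes t: "t \<ge> 0"
  shows "{x\<in>space M. X t x = i} \<in> sets (sig M (genX M X {0..t}))"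
proof -
  have gens: "genX M X {0..t} \<subseteq> sets M" by (rule genX_subset_sets) auto
  have "{x\<in>space M. X t x = i} = X t -` {i} \<inter> space M" by auto
  also have "\<dots> \<in> genX M X {0..t}" unfolding genX_def using t by (intro UN_I[of t]) auto
  finally show ?thesis by (rule rev_subsetD[OF _ generators_subset_sets_sig[OF gens]])
qed

lemma intensity_future_cond_indep_past:
  assumes t: "t \<ge> 0"
  shows "cond_indep M (sig M (genMu M J mu {t<..})) (sig M (genX M X {0..t}))
    (sig M (genMu M J mu {0..t}))"
proof -
  let ?I = "sig M (genMu M J mu {0..})" and ?F = "sig M (genMu M J mu {0..t})"
    and ?past = "sig M (genX M X {0..t})"
  have times: "{t<..} \<subseteq> {0..}" "{0..t} \<subseteq> {0..}"
    using t by auto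
  have gens: "genMu M J mu {0..} \<subseteq> sets M" "genX M X {0..t} \<subseteq> sets M"
    "genMu M J mu {t<..} \<subseteq> genMu M J mu {0..}" "genMu M J mu {0..t} \<subseteq> genMu M J mu {0..}"
    using times by (simp_all add: genX_subset_sets genMu_subset_sets genMu_mono)
  have I: "subalgebra M ?I" and IF: "subalgebra ?I ?F" and past: "subalgebra M ?past"
    using gens by (auto intro: subalgebra_sig subalgebra_sig_mono)
  show ?thesis
  proof (rule cond_indep_of_real_cond_exp_eq[OF prob_space_axioms I _ IF past])
    show "subalgebra ?I (sig M (genMu M J mu {t<..}))"
      using gens by (auto intro: subalgebra_sig_mono)
    fix b assume b: "b \<in> sets ?past"
    then obtain g where "g \<in> borel_measurable ?F" "AE x in M. real_cond_exp M ?I (indicator b) x = g x"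
      using canon[OF t] by blast
    moreover have "integrable M (indicator b :: _ \<Rightarrow> real)"
      using b past by (auto simp: subalgebra_def intro: integrable_indicator_real)
    ultimately show "AE x in M. real_cond_exp M ?I (indicator b) x = real_cond_exp M ?F (indicator b) x"
      by (intro real_cond_exp_eq_of_measurable_version[OF prob_space_axioms I IF])
  qed
qed

lemma joint_future_cond_indep_past:
  assumes t: "t \<ge> 0"
  shows "cond_indep M (sig M (genX M X {t<..} \<union> genMu M J mu {t<..})) (sig M (genX M X {0..t}))
    (sig M (genX M X {t} \<union> genMu M J mu {0..t}))"
proof -
  let ?EY = "genX M X {t}" and ?EI = "genMu M J mu {0..}" and ?EF = "genMu M J mu {0..t}"
    and ?past = "sig M (genX M X {0..t})"
  let ?Q = "sig M (genX M X {t<..} \<union> (?EY \<union> ?EI))"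
  have times: "{t<..} \<subseteq> {0..}" "{t} \<subseteq> {0..}" "{0..t} \<subseteq> {0..}" "{t} \<subseteq> {0..t}"
    using t by auto
  have gens: "genX M X {t<..} \<subseteq> sets M" "?EY \<subseteq> sets M" "?EI \<subseteq> sets M" "genX M X {0..t} \<subseteq> sets M"
    "genMu M J mu {t<..} \<subseteq> ?EI" "?EF \<subseteq> ?EI" "?EY \<subseteq> genX M X {0..t}"
    using times by (simp_all add: genX_subset_sets genMu_subset_sets genMu_mono genX_mono)
  have past: "subalgebra M ?past" and Q: "subalgebra M ?Q"
    and Q_future: "subalgebra ?Q (sig M (genX M X {t<..} \<union> genMu M J mu {t<..}))"
    and Q_present: "subalgebra ?Q (sig M (?EY \<union> ?EF))"
    using gens by (auto intro: subalgebra_sig subalgebra_sig_mono)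
  show ?thesis
  proof (rule cond_indep_of_real_cond_exp_eq[OF prob_space_axioms Q Q_future Q_present past])
    fix b assume b: "b \<in> sets ?past"
    have markov_step: "AE x in M. real_cond_exp M ?Q (indicator b) x
        = real_cond_exp M (sig M (?EY \<union> ?EI)) (indicator b) x"
      by (rule real_cond_exp_sig_Un_eq_of_cond_indep[OF prob_space_axioms _ _ past markov[OF t] b])
         (use gens in auto)
    have bM: "b \<in> sets M" using b past by (auto simp: subalgebra_def)
    have versions: "\<exists>g\<in>borel_measurable (sig M ?EF). AE x in M.
        real_cond_exp M (sig M ?EI) (indicator (A \<inter> {x\<in>space M. X t x = i})) x = g x"
      if A: "A \<in> {space M, b}" for A i
    proof (rule canon[OF t])
      have "{x\<in>space M. X t x = i} \<in> sets ?past" by (rule X_level_set_in_past[OF t])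
      moreover have "A \<inter> {x\<in>space M. X t x = i} = {x\<in>space M. X t x = i} \<or> A = b"
        using A by auto
      ultimately show "A \<inter> {x\<in>space M. X t x = i} \<in> sets ?past"
        using b by auto
    qed
    have intensity_step: "AE x in M. real_cond_exp M (sig M (?EY \<union> ?EI)) (indicator b) x
        = real_cond_exp M (sig M (?EY \<union> ?EF)) (indicator b) x"
      unfolding genX_singleton
      by (rule real_cond_exp_sig_vimage_Un_eq[OF prob_space_axioms X_meas[OF t] finite_atLeastAtMost
            X_vals[OF t] gens(3) gens(6) bM versions])
    show "AE x in M. real_cond_exp M ?Q (indicator b) x
        = real_cond_exp M (sig M (?EY \<union> ?EF)) (indicator b) x"
      using markov_step intensity_step by eventually_elim simp
  qed
qed

end

theorem lemma1:
  fixes M :: "'a measure" and J :: nat and x0 :: nat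
    and X :: "real \<Rightarrow> 'a \<Rightarrow> nat"
    and mu :: "nat \<Rightarrow> nat \<Rightarrow> real \<Rightarrow> 'a \<Rightarrow> real"
    and P :: "nat \<Rightarrow> nat \<Rightarrow> real \<Rightarrow> real \<Rightarrow> 'a \<Rightarrow> real"
  assumes prob: "prob_space M"
    \<comment> \<open>intensity processes\<close>
    and mu_meas: "\<And>j k t. j \<in> {0..J} \<Longrightarrow> k \<in> {0..J} \<Longrightarrow> k \<noteq> j \<Longrightarrow> t \<ge> 0 \<Longrightarrow>
          mu j k t \<in> borel_measurable M"
    and mu_nonneg: "\<And>j k t \<omega>. j \<in> {0..J} \<Longrightarrow> k \<in> {0..J} \<Longrightarrow> k \<noteq> j \<Longrightarrow> t \<ge> 0 \<Longrightarrow>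
          \<omega> \<in> space M \<Longrightarrow> mu j k t \<omega> \<ge> 0"
    and mu_cont: "\<And>j k \<omega>. j \<in> {0..J} \<Longrightarrow> k \<in> {0..J} \<Longrightarrow> k \<noteq> j \<Longrightarrow>
          \<omega> \<in> space M \<Longrightarrow> continuous_on {0..} (\<lambda>t. mu j k t \<omega>)"
    and mu_int: "\<And>j k t. j \<in> {0..J} \<Longrightarrow> k \<in> {0..J} \<Longrightarrow> k \<noteq> j \<Longrightarrow> t \<ge> 0 \<Longrightarrow>
          integrable M (mu j k t)"
    \<comment> \<open>the jump process X\<close>
    and x0: "x0 \<in> {0..J}"
    and X_meas: "\<And>t. t \<ge> 0 \<Longrightarrow> X t \<in> measurable M (count_space UNIV)"
    and X_vals: "\<And>t \<omega>. t \<ge> 0 \<Longrightarrow> \<omega> \<in> space M \<Longrightarrow> X t \<omega> \<in> {0..J}"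
    and X_init: "\<And>\<omega>. \<omega> \<in> space M \<Longrightarrow> X 0 \<omega> = x0"
    and X_rc: "\<And>t \<omega>. t \<ge> 0 \<Longrightarrow> \<omega> \<in> space M \<Longrightarrow>
          \<exists>e>0. \<forall>s\<in>{t..<t+e}. X s \<omega> = X t \<omega>"
    and X_ll: "\<And>t \<omega>. t > 0 \<Longrightarrow> \<omega> \<in> space M \<Longrightarrow>
          \<exists>e>0. \<exists>c. \<forall>s\<in>{t-e<..<t}. X s \<omega> = c"
    \<comment> \<open>conditional Markov property given the whole intensity path\<close>
    and markov: "\<And>t. t \<ge> 0 \<Longrightarrow>
          cond_indep M (sig M (genX M X {t<..})) (sig M (genX M X {0..t}))
            (sig M (genX M X {t} \<union> genMu M J mu {0..}))"
    \<comment> \<open>conditional transition probabilities\<close>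
    and P_meas: "\<And>j k t T. j \<in> {0..J} \<Longrightarrow> k \<in> {0..J} \<Longrightarrow> 0 \<le> t \<Longrightarrow> t < T \<Longrightarrow>
          P j k t T \<in> borel_measurable (sig M (genMu M J mu {t..T}))"
    and P_trans: "\<And>k t T. k \<in> {0..J} \<Longrightarrow> 0 \<le> t \<Longrightarrow> t < T \<Longrightarrow>
          AE \<omega> in M. real_cond_exp M (sig M (genX M X {0..t} \<union> genMu M J mu {0..}))
              (indicator {\<omega>\<in>space M. X T \<omega> = k}) \<omega> = P (X t \<omega>) k t T \<omega>"
    and P_lim: "\<And>j k t. j \<in> {0..J} \<Longrightarrow> k \<in> {0..J} \<Longrightarrow> k \<noteq> j \<Longrightarrow> t \<ge> 0 \<Longrightarrow>
          AE \<omega> in M. ((\<lambda>h. P j k t (t + h) \<omega> / h) \<longlongrightarrow> mu j k t \<omega>) (at_right 0)"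
    \<comment> \<open>canonical construction: conditional law of (X_s)_{s<=t} given F^mu_infty
        is F^mu_t-measurable\<close>
    and canon: "\<And>t A. t \<ge> 0 \<Longrightarrow> A \<in> sets (sig M (genX M X {0..t})) \<Longrightarrow>
          \<exists>g \<in> borel_measurable (sig M (genMu M J mu {0..t})).
            AE \<omega> in M. real_cond_exp M (sig M (genMu M J mu {0..})) (indicator A) \<omega> = g \<omega>"
  shows "\<forall>t\<ge>0.
     cond_indep M (sig M (genX M X {t<..} \<union> genMu M J mu {t<..})) (sig M (genX M X {0..t}))
        (sig M (genX M X {t} \<union> genMu M J mu {0..t}))
   \<and> cond_indep M (sig M (genMu M J mu {t<..})) (sig M (genX M X {0..t}))
        (sig M (genMu M J mu {0..t}))"
proof -
  interpret stochastic_intensity_jump_process M J X mu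
    by (rule stochastic_intensity_jump_process.intro[OF prob stochastic_intensity_jump_process_axioms.intro])
       (fact mu_meas X_meas X_vals markov canon)+
  show ?thesis using intensity_future_cond_indep_past joint_future_cond_indep_past by blast
qed

end
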